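(* For every prime $p$ and every integer $k$ with $1\le k\le p$, \[ \overline{M}_k(p)=p\,f_k(p)-f_k(1)+\sum_{j=2}^{p} f_k\!\left(\left\lfloor \frac{p}{j}\right\rfloor\right). \]
   Context: For a nonempty finite set $A$ of positive integers, $(A)$ denotes the greatest common divisor of the elements of $A$. For $m,k\in\mathbb{N}$, $f_k(m)$ is the number of $k$-element subsets $A\subseteq\{1,2,\ldots,m\}$ with $(A)=1$ (so $f_k(m)=0$ if $m<k$). For $1\le k\le n$, \[ \overline{M}_k(n)=\sum_{\substack{A\subseteq\{1,\ldots,n\},\ \#A=k\\ \gcd((A),n)=1}}\gcd((A)-1,n), \] with the convention $\gcd(0,n)=n$. *)

theory Defs
  imports "HOL-Number_Theory.Number_Theory"
begin

definition f :: "nat \<Rightarrow> nat \<Rightarrow> nat" where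
  "f k m = card {A. A \<subseteq> {1..m} \<and> card A = k \<and> Gcd A = 1}"

definition Mbar :: "nat \<Rightarrow> nat \<Rightarrow> nat" where
  "Mbar k n = (\<Sum>A\<in>{A. A \<subseteq> {1..n} \<and> card A = k \<and> coprime (Gcd A) n}.
                  gcd (Gcd A - 1) n)"

end

theory Submission
  imports Defs
begin

text \<open>Sort the subsets by their gcd \<open>d\<close>. Dividing by \<open>d\<close> is a bijection from
  the \<open>k\<close>-subsets of \<open>{1..n}\<close> with gcd \<open>d\<close> onto the \<open>k\<close>-subsets of \<open>{1..n div d}\<close> with
  gcd \<open>1\<close>, so each class has \<open>f k (n div d)\<close> members, and on it the summand of
  \<open>Mbar\<close> is the constant \<open>gcd (d - 1) n\<close>. For a prime \<open>p\<close> the admissible \<open>d\<close> are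
  \<open>1, \<dots>, p - 1\<close>; the summand is \<open>p\<close> for \<open>d = 1\<close> and \<open>1\<close> otherwise, and the term
  \<open>f k (p div p) = f k 1\<close> is what must be subtracted from the sum over \<open>j = 2..p\<close>.\<close>

definition subsets_Gcd :: "nat \<Rightarrow> nat \<Rightarrow> nat \<Rightarrow> nat set set" where
  "subsets_Gcd n k d = {A. A \<subseteq> {1..n} \<and> card A = k \<and> Gcd A = d}"

lemma finite_subsets_Gcd: "finite (subsets_Gcd n k d)"
  by (rule finite_subset[of _ "Pow {1..n}"]) (auto simp: subsets_Gcd_def)

lemma f_eq_card_subsets_Gcd: "f k m = card (subsets_Gcd m k 1)"
  by (simp add: f_def subsets_Gcd_def)

lemma subsets_Gcd_eq_image_mult:
  fixes d :: nat
  assumes "d > 0"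
  shows "subsets_Gcd n k d = (\<lambda>B. (*) d ` B) ` subsets_Gcd (n div d) k 1"
proof
  show "(\<lambda>B. (*) d ` B) ` subsets_Gcd (n div d) k 1 \<subseteq> subsets_Gcd n k d"
  proof
    fix A assume "A \<in> (\<lambda>B. (*) d ` B) ` subsets_Gcd (n div d) k 1"
    then obtain B where B: "B \<subseteq> {1..n div d}" "card B = k" "Gcd B = 1" and A: "A = (*) d ` B"
      by (auto simp: subsets_Gcd_def)
    have "d * x \<in> {1..n}" if "x \<in> B" for x
    proof -
      have "x \<le> n div d" using B(1) that by auto
      hence "d * x \<le> d * (n div d)" by simp
      also have "\<dots> \<le> n" by simp
      finally show ?thesis using assms B(1) that by auto
    qed
    moreover have "card A = k" using A B(2) assms by (simp add: card_image inj_on_def)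
    moreover have "Gcd A = d" using A B(3) by (simp add: Gcd_mult)
    ultimately show "A \<in> subsets_Gcd n k d" using A by (auto simp: subsets_Gcd_def)
  qed
next
  show "subsets_Gcd n k d \<subseteq> (\<lambda>B. (*) d ` B) ` subsets_Gcd (n div d) k 1"
  proof
    fix A assume "A \<in> subsets_Gcd n k d"
    hence A: "A \<subseteq> {1..n}" "card A = k" "Gcd A = d" by (auto simp: subsets_Gcd_def)
    define B where "B = (\<lambda>x. x div d) ` A"
    have AB: "A = (*) d ` B"
      unfolding B_def image_image using A(3) by (auto simp: image_iff)
    have "B \<subseteq> {1..n div d}"
    proof
      fix y assume "y \<in> B"
      then obtain x where x: "x \<in> A" "y = x div d" unfolding B_def by blast
      have "d dvd x" "1 \<le> x" "x \<le> n" using A x by auto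
      have "x div d \<noteq> 0" using \<open>d dvd x\<close> \<open>1 \<le> x\<close> assms by (auto elim: dvdE)
      moreover have "x div d \<le> n div d" using \<open>x \<le> n\<close> by (rule div_le_mono)
      ultimately show "y \<in> {1..n div d}" using x by simp
    qed
    moreover have "card B = k" using AB A(2) assms by (simp add: card_image inj_on_def)
    moreover have "Gcd B = 1" using AB A(3) assms by (simp add: Gcd_mult)
    ultimately show "A \<in> (\<lambda>B. (*) d ` B) ` subsets_Gcd (n div d) k 1"
      using AB by (auto simp: subsets_Gcd_def)
  qed
qed

lemma card_subsets_Gcd:
  assumes "d > 0"
  shows "card (subsets_Gcd n k d) = f k (n div d)"
proof -
  have "inj_on (\<lambda>B. (*) d ` B) X" for X :: "nat set set"
    using assms by (auto simp: inj_on_def inj_image_eq_iff)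
  thus ?thesis
    by (simp add: subsets_Gcd_eq_image_mult[OF assms] card_image f_eq_card_subsets_Gcd)
qed

lemma Gcd_in_atLeastAtMost:
  fixes A :: "nat set"
  assumes "A \<subseteq> {1..n}" "A \<noteq> {}"
  shows "Gcd A \<in> {1..n}"
proof -
  obtain x where x: "x \<in> A" using assms(2) by blast
  have "1 \<le> x" "x \<le> n" using x assms(1) by auto
  have "Gcd A \<le> x" using x \<open>1 \<le> x\<close> by (simp add: Gcd_dvd dvd_imp_le)
  moreover have "Gcd A \<noteq> 0" using x \<open>1 \<le> x\<close> by (auto simp: Gcd_0_iff)
  ultimately show ?thesis using \<open>x \<le> n\<close> unfolding atLeastAtMost_iff by linarith
qed

lemma Mbar_eq_sum_over_Gcd:
  assumes "1 \<le> k"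
  shows "Mbar k n = (\<Sum>d | d \<in> {1..n} \<and> coprime d n. gcd (d - 1) n * f k (n div d))"
proof -
  let ?D = "{d. d \<in> {1..n} \<and> coprime d n}"
  have "Gcd A \<in> {1..n}" if "A \<subseteq> {1..n}" "card A = k" for A
    using that assms by (intro Gcd_in_atLeastAtMost) auto
  hence "{A. A \<subseteq> {1..n} \<and> card A = k \<and> coprime (Gcd A) n} = (\<Union>d\<in>?D. subsets_Gcd n k d)"
    by (auto simp: subsets_Gcd_def)
  hence "Mbar k n = (\<Sum>A\<in>(\<Union>d\<in>?D. subsets_Gcd n k d). gcd (Gcd A - 1) n)"
    by (simp add: Mbar_def)
  also have "\<dots> = (\<Sum>d\<in>?D. \<Sum>A\<in>subsets_Gcd n k d. gcd (Gcd A - 1) n)"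
    by (rule sum.UNION_disjoint) (auto simp: finite_subsets_Gcd subsets_Gcd_def)
  also have "\<dots> = (\<Sum>d\<in>?D. \<Sum>A\<in>subsets_Gcd n k d. gcd (d - 1) n)"
    by (intro sum.cong) (auto simp: subsets_Gcd_def)
  also have "\<dots> = (\<Sum>d\<in>?D. gcd (d - 1) n * f k (n div d))"
    by (intro sum.cong) (auto simp: card_subsets_Gcd)
  finally show ?thesis .
qed

lemma coprime_prime_iff_atLeastLessThan:
  fixes p d :: nat
  assumes "prime p" "d \<in> {1..p}"
  shows "coprime d p \<longleftrightarrow> d \<in> {1..<p}"
proof
  assume "coprime d p"
  moreover have "\<not> coprime p p" using assms(1) by (auto simp: prime_gt_1_nat)
  ultimately have "d \<noteq> p" by blast
  thus "d \<in> {1..<p}" using assms(2) by simp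
next
  assume "d \<in> {1..<p}"
  hence "\<not> p dvd d" by (auto dest: dvd_imp_le)
  thus "coprime d p" using prime_imp_coprime[OF assms(1)] coprime_commute by blast
qed

lemma gcd_pred_prime:
  fixes p d :: nat
  assumes "prime p" "d \<in> {2..<p}"
  shows "gcd (d - 1) p = 1"
proof -
  have "\<not> p dvd d - 1" using assms(2) by (auto dest: dvd_imp_le)
  hence "coprime (d - 1) p" using prime_imp_coprime[OF assms(1)] coprime_commute by blast
  thus ?thesis by simp
qed

theorem mainTheorem6:
  fixes p k :: nat
  assumes "prime p" and "1 \<le> k" and "k \<le> p"
  shows "int (Mbar k p) = int p * int (f k p) - int (f k 1)
           + (\<Sum>j=2..p. int (f k (p div j)))"
proof -
  have "2 \<le> p" using assms(1) by (rule prime_ge_2_nat)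
  have "{d. d \<in> {1..p} \<and> coprime d p} = insert 1 {2..<p}"
    using coprime_prime_iff_atLeastLessThan[OF assms(1)] \<open>2 \<le> p\<close> by auto
  hence "Mbar k p = p * f k p + (\<Sum>d\<in>{2..<p}. gcd (d - 1) p * f k (p div d))"
    by (simp add: Mbar_eq_sum_over_Gcd[OF assms(2)])
  also have "\<dots> = p * f k p + (\<Sum>d\<in>{2..<p}. f k (p div d))"
    using gcd_pred_prime[OF assms(1)] by simp
  finally have "int (Mbar k p) = int p * int (f k p) + (\<Sum>j\<in>{2..<p}. int (f k (p div j)))"
    by simp
  moreover have "{2..p} = insert p {2..<p}" using \<open>2 \<le> p\<close> by auto
  ultimately show ?thesis using \<open>2 \<le> p\<close> by simp
qed

end
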